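(* Let $G$ be a simple cubic graph on vertex set $[n]$ with girth at least $16$, let $A$ be a MAI set of $G$, and let $B=V(G)\setminus A$. Then $B$ is an AI set, i.e. every vertex of $B$ has at most one neighbour in $B$.
   Context: A vertex set $A$ of a graph $G$ is an AI set (almost independent set) if $\Delta(G[A])\le 1$, i.e. every component of the induced subgraph $G[A]$ is a single vertex or a single edge. A vertex set $A$ is a MAI set (maximum almost independent set) of $G$ if (M1) $A$ is an AI set, (M2) $A$ contains an independent set of size $\alpha(G)$, and (M3) $A$ has maximum cardinality among all vertex sets satisfying (M1) and (M2). *)

theory Defs
  imports Main
begin

definition simple_graph :: "'a set \<Rightarrow> ('a \<Rightarrow> 'a \<Rightarrow> bool) \<Rightarrow> bool" where
  "simple_graph V E \<longleftrightarrow> finite V \<and> (\<forall>u v. E u v \<longrightarrow> u \<in> V \<and> v \<in> V)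
     \<and> (\<forall>u v. E u v \<longrightarrow> E v u) \<and> (\<forall>v. \<not> E v v)"

definition nbrs :: "'a set \<Rightarrow> ('a \<Rightarrow> 'a \<Rightarrow> bool) \<Rightarrow> 'a \<Rightarrow> 'a set" where
  "nbrs V E v = {u \<in> V. E v u}"

definition cubic :: "'a set \<Rightarrow> ('a \<Rightarrow> 'a \<Rightarrow> bool) \<Rightarrow> bool" where
  "cubic V E \<longleftrightarrow> (\<forall>v\<in>V. card (nbrs V E v) = 3)"

definition is_cycle :: "'a set \<Rightarrow> ('a \<Rightarrow> 'a \<Rightarrow> bool) \<Rightarrow> 'a list \<Rightarrow> bool" where
  "is_cycle V E cs \<longleftrightarrow> length cs \<ge> 3 \<and> distinct cs \<and> set cs \<subseteq> V
     \<and> (\<forall>i. Suc i < length cs \<longrightarrow> E (cs ! i) (cs ! Suc i))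
     \<and> E (last cs) (hd cs)"

definition girth_at_least :: "'a set \<Rightarrow> ('a \<Rightarrow> 'a \<Rightarrow> bool) \<Rightarrow> nat \<Rightarrow> bool" where
  "girth_at_least V E g \<longleftrightarrow> (\<forall>cs. is_cycle V E cs \<longrightarrow> length cs \<ge> g)"

definition independent :: "'a set \<Rightarrow> ('a \<Rightarrow> 'a \<Rightarrow> bool) \<Rightarrow> 'a set \<Rightarrow> bool" where
  "independent V E I \<longleftrightarrow> I \<subseteq> V \<and> (\<forall>u\<in>I. \<forall>v\<in>I. \<not> E u v)"

definition alpha :: "'a set \<Rightarrow> ('a \<Rightarrow> 'a \<Rightarrow> bool) \<Rightarrow> nat" where
  "alpha V E = Max (card ` {I. independent V E I})"

definition AI_set :: "'a set \<Rightarrow> ('a \<Rightarrow> 'a \<Rightarrow> bool) \<Rightarrow> 'a set \<Rightarrow> bool" where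
  "AI_set V E A \<longleftrightarrow> A \<subseteq> V \<and> (\<forall>v\<in>A. card (nbrs V E v \<inter> A) \<le> 1)"

definition M12 :: "'a set \<Rightarrow> ('a \<Rightarrow> 'a \<Rightarrow> bool) \<Rightarrow> 'a set \<Rightarrow> bool" where
  "M12 V E A \<longleftrightarrow> AI_set V E A \<and>
     (\<exists>I \<subseteq> A. independent V E I \<and> card I = alpha V E)"

definition MAI_set :: "'a set \<Rightarrow> ('a \<Rightarrow> 'a \<Rightarrow> bool) \<Rightarrow> 'a set \<Rightarrow> bool" where
  "MAI_set V E A \<longleftrightarrow> M12 V E A \<and> (\<forall>A'. M12 V E A' \<longrightarrow> card A' \<le> card A)"

end

theory Submission
  imports Defs
begin

text \<open>Every vertex v outside a MAI set A has at least two neighbours in A. Otherwise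
A \<union> {v} still contains a maximum independent set I \<subseteq> A, so by maximality it is not
an AI set; this forces the unique A-neighbour x of v to have a further A-neighbour y.
Maximality of I makes x \<in> I, and then (I - {x}) \<union> {v, y} is a larger independent
set. In a cubic graph v therefore has at most one neighbour outside A.\<close>

lemma nbrs_eq:
  assumes "simple_graph V E"
  shows "nbrs V E v = {u. E v u}"
  using assms unfolding simple_graph_def nbrs_def by blast

lemma card_nbrs_Int_le_1_iff:
  assumes "simple_graph V E"
  shows "card (nbrs V E v \<inter> S) \<le> 1 \<longleftrightarrow> (\<forall>b\<in>S. \<forall>c\<in>S. E v b \<longrightarrow> E v c \<longrightarrow> b = c)"
proof -
  have "finite (nbrs V E v \<inter> S)"
    using assms by (simp add: simple_graph_def nbrs_def)
  then show ?thesis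
    unfolding nbrs_eq[OF assms] by (auto simp: card_le_Suc0_iff_eq)
qed

lemma AI_set_iff:
  assumes "simple_graph V E"
  shows "AI_set V E A \<longleftrightarrow> A \<subseteq> V \<and> (\<forall>a\<in>A. \<forall>b\<in>A. \<forall>c\<in>A. E a b \<longrightarrow> E a c \<longrightarrow> b = c)"
  unfolding AI_set_def card_nbrs_Int_le_1_iff[OF assms] by blast

lemma AI_set_insert:
  assumes G: "simple_graph V E" and "AI_set V E A" "v \<in> V"
    and "\<forall>b\<in>A. \<forall>c\<in>A. E v b \<longrightarrow> E v c \<longrightarrow> b = c"
    and "\<forall>x\<in>A. E v x \<longrightarrow> (\<forall>y\<in>A. \<not> E x y)"
  shows "AI_set V E (insert v A)"
proof -
  have E_sym: "E a b \<Longrightarrow> E b a" and E_irrefl: "\<not> E a a" for a b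
    using G by (auto simp: simple_graph_def)
  show ?thesis
    using assms(2-5) unfolding AI_set_iff[OF G] by (auto dest: E_sym simp: E_irrefl)
qed

lemma independent_card_le_alpha:
  assumes "finite V" "independent V E J"
  shows "card J \<le> alpha V E"
proof -
  have "card ` {I. independent V E I} \<subseteq> {0..card V}"
    using assms(1) by (auto simp: independent_def intro: card_mono)
  then have "finite (card ` {I. independent V E I})"
    using finite_subset by blast
  then show ?thesis
    unfolding alpha_def using assms(2) by (auto intro: Max_ge)
qed

lemma independent_insert_Diff:
  assumes G: "simple_graph V E" and "independent V E I" "v \<in> V" "{u \<in> I. E v u} \<subseteq> X"
  shows "independent V E (insert v (I - X))"
proof -
  have E_sym: "E a b \<Longrightarrow> E b a" and E_irrefl: "\<not> E a a" for a b
    using G by (auto simp: simple_graph_def)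
  show ?thesis
    using assms(2-4) unfolding independent_def by (auto dest: E_sym simp: E_irrefl)
qed

lemma maximum_independent_dominating:
  assumes G: "simple_graph V E" and I: "independent V E I" and "card I = alpha V E" "v \<in> V - I"
  shows "\<exists>u\<in>I. E v u"
proof (rule ccontr)
  assume "\<not> (\<exists>u\<in>I. E v u)"
  then have "independent V E (insert v (I - {}))"
    using assms by (intro independent_insert_Diff) auto
  moreover have "finite V"
    using G by (simp add: simple_graph_def)
  moreover have "finite I"
    using I \<open>finite V\<close> by (auto simp: independent_def intro: finite_subset)
  ultimately show False
    using assms(3,4) independent_card_le_alpha[of V E "insert v I"] by simp
qed

lemma MAI_set_two_nbrs_outside:
  assumes G: "simple_graph V E" and MAI: "MAI_set V E A" and v: "v \<in> V - A"
  shows "card (nbrs V E v \<inter> A) \<ge> 2"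
proof (rule ccontr)
  assume "\<not> card (nbrs V E v \<inter> A) \<ge> 2"
  then have "card (nbrs V E v \<inter> A) \<le> 1"
    by linarith
  then have v_unique: "\<forall>b\<in>A. \<forall>c\<in>A. E v b \<longrightarrow> E v c \<longrightarrow> b = c"
    using card_nbrs_Int_le_1_iff[OF G] by blast
  have E_sym: "E a b \<Longrightarrow> E b a" and E_irrefl: "\<not> E a a" and finV: "finite V" for a b
    using G by (auto simp: simple_graph_def)
  have AI: "AI_set V E A" and A_max: "\<And>A'. M12 V E A' \<Longrightarrow> card A' \<le> card A"
    using MAI by (auto simp: MAI_set_def M12_def)
  obtain I where IA: "I \<subseteq> A" and I: "independent V E I" and I_card: "card I = alpha V E"
    using MAI by (auto simp: MAI_set_def M12_def)
  have A_unique: "\<forall>a\<in>A. \<forall>b\<in>A. \<forall>c\<in>A. E a b \<longrightarrow> E a c \<longrightarrow> b = c" and AV: "A \<subseteq> V"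
    using AI AI_set_iff[OF G] by auto
  have finA: "finite A"
    using AV finV by (rule finite_subset)
  have "\<not> AI_set V E (insert v A)"
  proof
    assume "AI_set V E (insert v A)"
    then have "card (insert v A) \<le> card A"
      using IA I I_card by (intro A_max) (auto simp: M12_def)
    then show False
      using v finA by simp
  qed
  then obtain x y where x: "x \<in> A" "E v x" and y: "y \<in> A" "E x y"
    using AI_set_insert[OF G AI] v v_unique by blast
  have v_nbr: "\<forall>u\<in>A. E v u \<longrightarrow> u = x"
    using v_unique x by blast
  have "x \<in> I"
    using maximum_independent_dominating[OF G I I_card] v IA v_nbr by blast
  have "y \<notin> I" "y \<noteq> v" "\<not> E v y"
    using I \<open>x \<in> I\<close> y v v_nbr E_irrefl by (auto simp: independent_def)
  have "\<forall>u\<in>A. E y u \<longrightarrow> u = x"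
    using A_unique x y E_sym by blast
  then have "{u \<in> I. E y u} \<subseteq> {x}"
    using IA by auto
  then have "independent V E (insert y (I - {x}))"
    using independent_insert_Diff[OF G I] y AV by blast
  moreover have "{u \<in> insert y (I - {x}). E v u} \<subseteq> {}"
    using v_nbr IA \<open>\<not> E v y\<close> by auto
  ultimately have "independent V E (insert v (insert y (I - {x}) - {}))"
    using independent_insert_Diff[OF G] v by blast
  then have "card (insert v (insert y (I - {x}))) \<le> card I"
    using independent_card_le_alpha[OF finV] I_card by simp
  moreover have "card (insert v (insert y (I - {x}))) = Suc (card I)"
  proof -
    have "finite I" "v \<notin> I"
      using IA finA v by (auto intro: finite_subset)
    then show ?thesis
      using \<open>x \<in> I\<close> \<open>y \<notin> I\<close> \<open>y \<noteq> v\<close> card_Suc_Diff1[of I x] by simp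
  qed
  ultimately show False
    by simp
qed

theorem lemma6:
  fixes n :: nat and E :: "nat \<Rightarrow> nat \<Rightarrow> bool" and A :: "nat set"
  assumes "simple_graph {1..n} E"
    and "cubic {1..n} E"
    and "girth_at_least {1..n} E 16"
    and "MAI_set {1..n} E A"
  shows "AI_set {1..n} E ({1..n} - A)"
  unfolding AI_set_def
proof (intro conjI ballI)
  fix v assume v: "v \<in> {1..n} - A"
  let ?N = "nbrs {1..n} E v"
  have "card ?N = card (?N \<inter> A) + card (?N \<inter> ({1..n} - A))"
    by (subst card_Un_disjoint[symmetric]) (auto simp: nbrs_def intro: arg_cong[where f = card])
  moreover have "card ?N = 3"
    using assms(2) v by (simp add: cubic_def)
  moreover have "card (?N \<inter> A) \<ge> 2"
    using MAI_set_two_nbrs_outside[OF assms(1,4) v] .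
  ultimately show "card (?N \<inter> ({1..n} - A)) \<le> 1"
    by linarith
qed simp

end
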